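(* Let $q_1,\ldots,q_g$ be binary quadratic forms with integer coefficients, let $D\in\mathbb N$, $\mathbf z\in\mathbb Z^2$, and let $d_1,\ldots,d_g$ be positive integers with $\gcd(d_i,D)=1$ for $i=1,\ldots,g$. Then for every $\mathcal R\subset\mathbb R^2$, $$\#(\Lambda_{\mathbf d}\cap\mathcal R\cap\Psi)=\sum_{b\mid\psi(\mathbf d)}\#\bigl(\Lambda^*_{\mathbf c}\cap\mathcal R/b\cap\Psi_b\bigr),$$ where, for each $b$, $\mathbf c=(c_1,\ldots,c_g)$ with $c_i:=d_i/\gcd(d_i,b^2)$.
   Context: $\Lambda_{\mathbf d}:=\{\mathbf x\in\mathbb Z^2:d_i\mid q_i(\mathbf x),\ i=1,\ldots,g\}$; $\Lambda^*_{\mathbf c}:=\{\mathbf x\in\Lambda_{\mathbf c}:\gcd(x_1,x_2,c_1\cdots c_g)=1\}$; $\Psi:=\{\mathbf x\in\mathbb Z^2:\mathbf x\equiv\mathbf z\pmod D\}$; $\Psi_b:=\{\mathbf x\in\mathbb Z^2:b\mathbf x\in\Psi\}$; $\mathcal R/b:=\{\mathbf y/b:\mathbf y\in\mathcal R\}$. The function $\psi$ on $g$-tuples of positive integers is multiplicative (i.e. $\psi(\mathbf d)=\prod_p\psi(p^{v_p(d_1)},\ldots,p^{v_p(d_g)})$) with $\psi(p^{\alpha_1},\ldots,p^{\alpha_g}):=p^{\lceil\max(\alpha_1,\ldots,\alpha_g)/2\rceil}$. *)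

theory Defs
  imports Complex_Main "HOL-Library.Extended_Nat" "HOL-Number_Theory.Number_Theory"
begin

definition qf :: "int \<times> int \<times> int \<Rightarrow> int \<times> int \<Rightarrow> int" where
  "qf abc x = (case abc of (a, b, c) \<Rightarrow>
      a * (fst x)^2 + b * fst x * snd x + c * (snd x)^2)"

definition ecard :: "'a set \<Rightarrow> enat" where
  "ecard A = (if finite A then enat (card A) else \<infinity>)"

definition Lambda :: "nat \<Rightarrow> (nat \<Rightarrow> int \<times> int \<times> int) \<Rightarrow> (nat \<Rightarrow> nat) \<Rightarrow> (int \<times> int) set" where
  "Lambda g q d = {x. \<forall>i<g. int (d i) dvd qf (q i) x}"

definition Lambda_star :: "nat \<Rightarrow> (nat \<Rightarrow> int \<times> int \<times> int) \<Rightarrow> (nat \<Rightarrow> nat) \<Rightarrow> (int \<times> int) set" where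
  "Lambda_star g q c = {x \<in> Lambda g q c.
      gcd (fst x) (gcd (snd x) (\<Prod>i<g. int (c i))) = 1}"

definition Psi :: "nat \<Rightarrow> int \<times> int \<Rightarrow> (int \<times> int) set" where
  "Psi D z = {x. [fst x = fst z] (mod int D) \<and> [snd x = snd z] (mod int D)}"

definition Psi_b :: "nat \<Rightarrow> int \<times> int \<Rightarrow> nat \<Rightarrow> (int \<times> int) set" where
  "Psi_b D z b = {x. (int b * fst x, int b * snd x) \<in> Psi D z}"

definition int_pts :: "(real \<times> real) set \<Rightarrow> (int \<times> int) set" where
  "int_pts R = {x. (real_of_int (fst x), real_of_int (snd x)) \<in> R}"

definition scale_div :: "(real \<times> real) set \<Rightarrow> nat \<Rightarrow> (real \<times> real) set" where
  "scale_div R b = (\<lambda>y. (fst y / real b, snd y / real b)) ` R"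

definition psi :: "nat \<Rightarrow> (nat \<Rightarrow> nat) \<Rightarrow> nat" where
  "psi g d = (\<Prod>p\<in>(\<Union>i<g. prime_factors (d i)).
      p ^ ((Max ((\<lambda>i. multiplicity p (d i)) ` {..<g}) + 1) div 2))"

end

(* Sort the points x of Lambda_d /\ R /\ Psi by b = gcd(x1, x2, psi(d)) and write x = b y.
   Since q_i(b y) = b^2 q_i(y), the condition d_i | q_i(x) becomes c_i | q_i(y), and
   gcd(x1, x2, psi(d)) = b becomes gcd(y1, y2, psi(d)/b) = 1.  As psi(d) is the least N > 0 with
   d_i | N^2 for all i, the numbers c_1 ... c_g and psi(d)/b have the same prime divisors, so the
   last condition says exactly that y lies in Lambda*_c. *)
theory Submission
  imports Defs
begin

lemma dvd_mult_iff_div_gcd_dvd: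
  fixes a k x :: "'a :: semiring_gcd"
  assumes "a \<noteq> 0"
  shows "a dvd k * x \<longleftrightarrow> a div gcd a k dvd x"
proof -
  define e where "e = gcd a k"
  define a' k' where "a' = a div e" and "k' = k div e"
  have "e \<noteq> 0" using assms by (simp add: e_def)
  have a: "a = e * a'" and k: "k = e * k'"
    by (simp_all add: e_def a'_def k'_def)
  have "coprime a' k'"
    using assms by (simp add: e_def a'_def k'_def div_gcd_coprime)
  have "a dvd k * x \<longleftrightarrow> e * a' dvd e * (k' * x)"
    by (simp add: a k mult.assoc)
  also have "\<dots> \<longleftrightarrow> a' dvd x"
    using \<open>e \<noteq> 0\<close> \<open>coprime a' k'\<close> by (simp add: coprime_dvd_mult_right_iff)
  finally show ?thesis by (simp add: e_def a'_def)
qed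

lemma gcd_mult_eq_self_iff:
  fixes b m P :: int
  assumes "b > 0" and "b dvd P"
  shows "gcd (b * m) P = b \<longleftrightarrow> coprime m (P div b)"
proof -
  obtain P' where P: "P = b * P'"
    using assms(2) by (rule dvdE)
  then have "gcd (b * m) P = b * gcd m P'" and "P div b = P'"
    using assms(1) by (simp_all add: gcd_mult_left)
  then show ?thesis
    using assms(1) by (simp add: coprime_iff_gcd_eq_1)
qed

lemma ecard_image: "inj_on f A \<Longrightarrow> ecard (f ` A) = ecard A"
  by (simp add: ecard_def finite_image_iff card_image)

lemma ecard_Un_disjoint:
  assumes "A \<inter> B = {}"
  shows "ecard (A \<union> B) = ecard A + ecard B"
  using assms by (auto simp: ecard_def card_Un_disjoint)

lemma ecard_UN_disjoint:
  assumes "finite I" and "\<forall>i\<in>I. \<forall>j\<in>I. i \<noteq> j \<longrightarrow> A i \<inter> A j = {}"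
  shows "ecard (\<Union>i\<in>I. A i) = (\<Sum>i\<in>I. ecard (A i))"
  using assms
proof (induction I rule: finite_induct)
  case empty
  then show ?case by (simp add: ecard_def zero_enat_def)
next
  case (insert i I)
  have "\<forall>j\<in>I. A i \<inter> A j = {}"
    using insert.prems insert.hyps(2) by (metis insertCI)
  then have "ecard (\<Union>j\<in>insert i I. A j) = ecard (A i) + ecard (\<Union>j\<in>I. A j)"
    by (simp add: ecard_Un_disjoint Int_UN_distrib)
  also have "ecard (\<Union>j\<in>I. A j) = (\<Sum>j\<in>I. ecard (A j))"
    using insert.IH insert.prems by blast
  finally show ?case
    using insert.hyps by simp
qed

lemma ecard_eq_sum_ecard_fibres:
  assumes "finite B" and "h ` A \<subseteq> B"
  shows "ecard A = (\<Sum>b\<in>B. ecard {x\<in>A. h x = b})"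
proof -
  have "A = (\<Union>b\<in>B. {x\<in>A. h x = b})"
    using assms(2) by blast
  also have "ecard \<dots> = (\<Sum>b\<in>B. ecard {x\<in>A. h x = b})"
    using assms(1) by (intro ecard_UN_disjoint) auto
  finally show ?thesis .
qed

lemma psi_pos: "psi g d > 0"
  unfolding psi_def by (intro prod_pos) (auto intro: prime_gt_0_nat)

lemma multiplicity_psi:
  fixes p :: nat
  assumes "prime p" and "g > 0"
  shows "multiplicity p (psi g d) = (Max ((\<lambda>i. multiplicity p (d i)) ` {..<g}) + 1) div 2"
proof (cases "p \<in> (\<Union>i<g. prime_factors (d i))")
  case True
  then show ?thesis
    unfolding psi_def using assms(1) by (subst multiplicity_prod_prime_powers) auto
next
  case False
  then have "\<forall>i<g. multiplicity p (d i) = 0"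
    using assms(1) by (auto simp: prime_factors_multiplicity)
  then have "(\<lambda>i. multiplicity p (d i)) ` {..<g} = {0}"
    using assms(2) by force
  then show ?thesis
    unfolding psi_def using False assms(1) by (subst multiplicity_prod_prime_powers) auto
qed

lemma dvd_psi_square:
  assumes "i < g" and "d i > 0"
  shows "d i dvd (psi g d)^2"
proof (rule multiplicity_le_imp_dvd)
  fix p :: nat
  assume p: "prime p"
  have "multiplicity p (d i) \<le> Max ((\<lambda>i. multiplicity p (d i)) ` {..<g})"
    using assms(1) by (intro Max_ge) auto
  also have "\<dots> \<le> 2 * multiplicity p (psi g d)"
    using multiplicity_psi[OF p, of g d] assms(1) by simp
  also have "\<dots> = multiplicity p ((psi g d)^2)"
    using p psi_pos[of g d] by (simp add: prime_elem_multiplicity_power_distrib)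
  finally show "multiplicity p (d i) \<le> multiplicity p ((psi g d)^2)" .
qed (use assms(2) in simp)

lemma psi_least:
  fixes n :: nat
  assumes "n > 0" and "\<forall>i<g. d i dvd n^2"
  shows "psi g d dvd n"
proof (rule multiplicity_le_imp_dvd)
  fix p :: nat
  assume p: "prime p"
  show "multiplicity p (psi g d) \<le> multiplicity p n"
  proof (cases "g = 0")
    case True
    then show ?thesis by (simp add: psi_def)
  next
    case False
    then obtain i where i: "i < g"
      and max: "Max ((\<lambda>i. multiplicity p (d i)) ` {..<g}) = multiplicity p (d i)"
      using Max_in[of "(\<lambda>i. multiplicity p (d i)) ` {..<g}"] by fastforce
    have "multiplicity p (d i) \<le> multiplicity p (n^2)"
      using assms i by (intro dvd_imp_multiplicity_le) auto
    also have "\<dots> = 2 * multiplicity p n"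
      using p assms(1) by (simp add: prime_elem_multiplicity_power_distrib)
    finally show ?thesis
      using multiplicity_psi[OF p, of g d] False max by simp
  qed
qed (use psi_pos in simp)

lemma div_gcd_square_dvd_psi_div_square:
  fixes b :: nat
  assumes "i < g" and "d i > 0" and "b dvd psi g d"
  shows "d i div gcd (d i) (b^2) dvd (psi g d div b)^2"
proof -
  have "d i dvd b^2 * (psi g d div b)^2"
    using dvd_psi_square[of i g d] assms by (simp add: power_mult_distrib[symmetric])
  then show ?thesis
    using assms(2) by (simp add: dvd_mult_iff_div_gcd_dvd)
qed

(* Otherwise N = b (psi/b)/p would satisfy d_i | N^2 for all i, contradicting the minimality of psi. *)
lemma prime_dvd_psi_div_imp_dvd_div_gcd_square:
  fixes b p :: nat
  assumes "b dvd psi g d" and "prime p" and "p dvd psi g d div b"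
  shows "\<exists>i<g. p dvd d i div gcd (d i) (b^2)"
proof (rule ccontr)
  assume no_p: "\<not> ?thesis"
  obtain t where t: "psi g d div b = p * t"
    using assms(3) by blast
  have psi: "psi g d = b * p * t"
    using assms(1) t by (metis dvd_mult_div_cancel mult.assoc)
  then have "b > 0" "t > 0"
    using psi_pos[of g d] by auto
  have "d i dvd (b * t)^2" if "i < g" for i
  proof -
    let ?c = "d i div gcd (d i) (b^2)"
    have "\<not> p dvd ?c" using no_p that by blast
    then have "d i > 0" by (cases "d i") auto
    then have "?c dvd (p * t)^2"
      using div_gcd_square_dvd_psi_div_square[OF that _ assms(1)] t by simp
    moreover have "coprime ?c (p^2)"
      using prime_imp_power_coprime[OF assms(2) \<open>\<not> p dvd ?c\<close>] .
    ultimately have "?c dvd t^2"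
      by (simp add: power_mult_distrib coprime_dvd_mult_right_iff)
    then show ?thesis
      using \<open>d i > 0\<close> by (simp add: power_mult_distrib dvd_mult_iff_div_gcd_dvd)
  qed
  then have "b * p * t dvd b * t"
    using psi_least[of "b * t" g d] \<open>b > 0\<close> \<open>t > 0\<close> psi by simp
  then have "p dvd 1"
    using \<open>b > 0\<close> \<open>t > 0\<close> by simp
  then show False
    using assms(2) by simp
qed

lemma coprime_prod_div_gcd_square_iff:
  fixes m b :: nat
  assumes "\<forall>i<g. d i > 0" and "b dvd psi g d"
  shows "coprime m (\<Prod>i<g. d i div gcd (d i) (b^2)) \<longleftrightarrow> coprime m (psi g d div b)"
proof
  assume coprime_prod: "coprime m (\<Prod>i<g. d i div gcd (d i) (b^2))"
  show "coprime m (psi g d div b)"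
  proof (rule ccontr)
    assume "\<not> coprime m (psi g d div b)"
    then have "\<not> is_unit (gcd m (psi g d div b))"
      by (metis is_unit_gcd)
    moreover have "gcd m (psi g d div b) \<noteq> 0"
      using assms(2) psi_pos[of g d] by (simp add: dvd_div_eq_0_iff)
    ultimately obtain p where p: "prime p" "p dvd gcd m (psi g d div b)"
      using prime_divisor_exists by blast
    then obtain i where "i < g" and p_dvd: "p dvd d i div gcd (d i) (b^2)"
      using prime_dvd_psi_div_imp_dvd_div_gcd_square[OF assms(2)] by auto
    have "d i div gcd (d i) (b^2) dvd (\<Prod>i<g. d i div gcd (d i) (b^2))"
      using \<open>i < g\<close> by (intro dvd_prodI) auto
    with p_dvd have "p dvd (\<Prod>i<g. d i div gcd (d i) (b^2))"
      by (rule dvd_trans)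
    moreover have "p dvd m"
      using p(2) by simp
    ultimately have "is_unit p"
      using coprime_prod coprime_common_divisor by blast
    then show False
      using p(1) by (simp add: not_prime_unit)
  qed
next
  assume "coprime m (psi g d div b)"
  then have coprime_square: "coprime m ((psi g d div b)^2)"
    by simp
  show "coprime m (\<Prod>i<g. d i div gcd (d i) (b^2))"
  proof (rule prod_coprime_right)
    fix i
    assume "i \<in> {..<g}"
    then have "d i div gcd (d i) (b^2) dvd (psi g d div b)^2"
      using assms by (intro div_gcd_square_dvd_psi_div_square) auto
    from coprime_divisors[OF dvd_refl this coprime_square]
    show "coprime m (d i div gcd (d i) (b^2))" .
  qed
qed

definition scale_pt :: "nat \<Rightarrow> int \<times> int \<Rightarrow> int \<times> int" where
  "scale_pt b x = (int b * fst x, int b * snd x)"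

lemma inj_scale_pt: "b > 0 \<Longrightarrow> inj (scale_pt b)"
  by (auto simp: inj_def scale_pt_def prod_eq_iff)

lemma gcd_scale_pt: "gcd (fst (scale_pt b x)) (snd (scale_pt b x)) = int b * gcd (fst x) (snd x)"
  by (simp add: scale_pt_def gcd_mult_left)

lemma qf_scale: "qf abc (k * fst x, k * snd x) = k^2 * qf abc x"
  by (cases abc) (simp add: qf_def algebra_simps power2_eq_square)

lemma scale_pt_mem_Lambda_iff:
  assumes "\<forall>i<g. d i > 0"
  shows "scale_pt b x \<in> Lambda g q d \<longleftrightarrow> x \<in> Lambda g q (\<lambda>i. d i div gcd (d i) (b^2))"
proof -
  have "int (d i) dvd (int b)^2 * qf (q i) x \<longleftrightarrow> int (d i div gcd (d i) (b^2)) dvd qf (q i) x"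
    if "i < g" for i
    using assms that by (simp add: dvd_mult_iff_div_gcd_dvd zdiv_int gcd_int_int_eq[symmetric])
  then show ?thesis
    by (simp add: Lambda_def scale_pt_def qf_scale)
qed

lemma scale_pt_mem_int_pts_iff:
  assumes "b > 0"
  shows "scale_pt b x \<in> int_pts R \<longleftrightarrow> x \<in> int_pts (scale_div R b)"
proof -
  let ?f = "\<lambda>y. (fst y / real b, snd y / real b)"
  have "inj ?f"
    using assms by (auto simp: inj_def prod_eq_iff)
  have "(real_of_int (fst x), real_of_int (snd x)) =
      ?f (real_of_int (fst (scale_pt b x)), real_of_int (snd (scale_pt b x)))"
    using assms by (simp add: scale_pt_def)
  then have "x \<in> int_pts (scale_div R b) \<longleftrightarrow>
      ?f (real_of_int (fst (scale_pt b x)), real_of_int (snd (scale_pt b x))) \<in> ?f ` R"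
    by (simp only: int_pts_def scale_div_def mem_Collect_eq)
  also have "\<dots> \<longleftrightarrow> (real_of_int (fst (scale_pt b x)), real_of_int (snd (scale_pt b x))) \<in> R"
    using \<open>inj ?f\<close> by (rule inj_image_mem_iff)
  also have "\<dots> \<longleftrightarrow> scale_pt b x \<in> int_pts R"
    by (simp add: int_pts_def)
  finally show ?thesis ..
qed

lemma Lambda_star_iff:
  "x \<in> Lambda_star g q c \<longleftrightarrow>
     x \<in> Lambda g q c \<and> coprime (gcd (fst x) (snd x)) (int (\<Prod>i<g. c i))"
  by (simp add: Lambda_star_def gcd.assoc coprime_iff_gcd_eq_1)

lemma scale_pt_mem_Psi_iff: "scale_pt b x \<in> Psi D z \<longleftrightarrow> x \<in> Psi_b D z b"
  by (simp add: Psi_b_def scale_pt_def)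

lemma scale_pt_mem_iff_mem_Lambda_star:
  assumes d_pos: "\<forall>i<g. d i > 0" and b_dvd: "b dvd psi g d"
  shows "scale_pt b y \<in> Lambda g q d \<inter> int_pts R \<inter> Psi D z \<and>
      gcd (gcd (fst (scale_pt b y)) (snd (scale_pt b y))) (int (psi g d)) = int b \<longleftrightarrow>
    y \<in> Lambda_star g q (\<lambda>i. d i div gcd (d i) (b^2)) \<inter> int_pts (scale_div R b) \<inter> Psi_b D z b"
proof -
  have "b > 0"
    using dvd_pos_nat[OF psi_pos b_dvd] .
  let ?m = "gcd (fst y) (snd y)"
  have "gcd (int b * ?m) (int (psi g d)) = int b \<longleftrightarrow> coprime ?m (int (psi g d div b))"
    using b_dvd \<open>b > 0\<close> by (simp add: gcd_mult_eq_self_iff zdiv_int)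
  also have "\<dots> \<longleftrightarrow> coprime ?m (int (\<Prod>i<g. d i div gcd (d i) (b^2)))"
    using coprime_prod_div_gcd_square_iff[OF d_pos b_dvd, of "nat \<bar>?m\<bar>"]
    unfolding coprime_nat_abs_left_iff by (rule sym)
  finally show ?thesis
    using \<open>b > 0\<close> d_pos
    by (auto simp: Lambda_star_iff scale_pt_mem_Lambda_iff scale_pt_mem_int_pts_iff
        scale_pt_mem_Psi_iff gcd_scale_pt)
qed

lemma scale_pt_image_eq_gcd_fibre:
  assumes d_pos: "\<forall>i<g. d i > 0" and b_dvd: "b dvd psi g d"
  shows "{x \<in> Lambda g q d \<inter> int_pts R \<inter> Psi D z.
            gcd (gcd (fst x) (snd x)) (int (psi g d)) = int b} =
    scale_pt b ` (Lambda_star g q (\<lambda>i. d i div gcd (d i) (b^2)) \<inter> int_pts (scale_div R b) \<inter> Psi_b D z b)"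
    (is "?F = scale_pt b ` ?T")
proof (intro equalityI subsetI)
  fix x
  assume "x \<in> ?F"
  then have x_S: "x \<in> Lambda g q d \<inter> int_pts R \<inter> Psi D z"
    and gcd_x: "gcd (gcd (fst x) (snd x)) (int (psi g d)) = int b"
    by auto
  then have "int b dvd fst x" "int b dvd snd x"
    by (metis gcd_dvd1 gcd_dvd2 dvd_trans)+
  then have x: "x = scale_pt b (fst x div int b, snd x div int b)"
    by (simp add: scale_pt_def prod_eq_iff)
  have "(fst x div int b, snd x div int b) \<in> ?T"
    using scale_pt_mem_iff_mem_Lambda_star[OF d_pos b_dvd, of "(fst x div int b, snd x div int b)"]
      x[symmetric] x_S gcd_x
    by simp
  with x show "x \<in> scale_pt b ` ?T"
    by blast
next
  fix x
  assume "x \<in> scale_pt b ` ?T"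
  then obtain y where "y \<in> ?T" and "x = scale_pt b y"
    by blast
  then show "x \<in> ?F"
    using scale_pt_mem_iff_mem_Lambda_star[OF d_pos b_dvd, of y q R D z]
    by simp
qed

theorem lemma2p2:
  fixes g :: nat and q :: "nat \<Rightarrow> int \<times> int \<times> int" and D :: nat
    and z :: "int \<times> int" and d :: "nat \<Rightarrow> nat" and R :: "(real \<times> real) set"
  assumes "\<forall>i<g. d i > 0"
    and "\<forall>i<g. coprime (d i) D"
  shows "ecard (Lambda g q d \<inter> int_pts R \<inter> Psi D z) =
    (\<Sum>b\<in>{b. b dvd psi g d}.
       ecard (Lambda_star g q (\<lambda>i. d i div gcd (d i) (b^2))
              \<inter> int_pts (scale_div R b) \<inter> Psi_b D z b))"
proof -
  define S where "S = Lambda g q d \<inter> int_pts R \<inter> Psi D z"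
  define h where "h x = nat (gcd (gcd (fst x) (snd x)) (int (psi g d)))" for x
  have "ecard S = (\<Sum>b\<in>{b. b dvd psi g d}. ecard {x\<in>S. h x = b})"
    using psi_pos[of g d] by (intro ecard_eq_sum_ecard_fibres) (auto simp: h_def nat_dvd_iff)
  also have "\<dots> = (\<Sum>b\<in>{b. b dvd psi g d}. ecard (Lambda_star g q (\<lambda>i. d i div gcd (d i) (b^2))
              \<inter> int_pts (scale_div R b) \<inter> Psi_b D z b))"
  proof (rule sum.cong)
    fix b
    assume "b \<in> {b. b dvd psi g d}"
    then have b_dvd: "b dvd psi g d" and "b > 0"
      using dvd_pos_nat[OF psi_pos] by auto
    have "{x\<in>S. h x = b} = {x\<in>S. gcd (gcd (fst x) (snd x)) (int (psi g d)) = int b}"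
      by (simp add: h_def nat_eq_iff)
    then show "ecard {x\<in>S. h x = b} = ecard (Lambda_star g q (\<lambda>i. d i div gcd (d i) (b^2))
              \<inter> int_pts (scale_div R b) \<inter> Psi_b D z b)"
      unfolding S_def scale_pt_image_eq_gcd_fibre[OF assms(1) b_dvd]
      by (simp add: ecard_image inj_on_subset[OF inj_scale_pt[OF \<open>b > 0\<close>]])
  qed simp
  finally show ?thesis
    unfolding S_def .
qed

end
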